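(* Let $m\ge1$ and $l\ge1$ be integers. For every $k=0,1,\dots,m$, \[ \left(\prod_{\substack{p\le m\\ p\text{ prime}}}p^{\lfloor m/p\rfloor v_p(l!)-v_p(l)}\right)^{-1}B^*_{k,0}(t)\in\mathbb{Z}[t]. \]
   Context: $v_p$ is the $p$-adic valuation. For $k=0,\dots,m$ let $l^{(k)}_h=l$ for $h\ne k$ and $l^{(k)}_k=l-1$ ($h=0,\dots,m$), and $L=(m+1)l-1$. For $j,k\in\{0,\dots,m\}$ define $\sigma^{(k,j)}_i$ by $\prod_{h=0}^m(h-j-w)^{l^{(k)}_h}=\sum_{i=0}^L\sigma^{(k,j)}_iw^i$, and \[ B^*_{k,j}(t)=\frac{1}{(l-1)!}\sum_{i=0}^{L}t^{L-i}\,i!\,\sigma^{(k,j)}_i \] (equivalently $B^*_{k,j}(t)=\frac{t^{L+1}}{(l-1)!}\int_0^\infty e^{-yt}\prod_{h=0}^m(h-j-y)^{l^{(k)}_h}\,dy$ for $t>0$). *)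

theory Defs
  imports "HOL-Computational_Algebra.Computational_Algebra"
begin

definition lexp :: "nat \<Rightarrow> nat \<Rightarrow> nat \<Rightarrow> nat" where
  "lexp l k h = (if h = k then l - 1 else l)"

definition bigL :: "nat \<Rightarrow> nat \<Rightarrow> nat" where
  "bigL m l = (m + 1) * l - 1"

definition Pkj :: "nat \<Rightarrow> nat \<Rightarrow> nat \<Rightarrow> nat \<Rightarrow> int poly" where
  "Pkj m l k j = (\<Prod>h\<in>{0..m}. [: int h - int j, -1 :] ^ lexp l k h)"

definition sigma :: "nat \<Rightarrow> nat \<Rightarrow> nat \<Rightarrow> nat \<Rightarrow> nat \<Rightarrow> int" where
  "sigma m l k j i = coeff (Pkj m l k j) i"

definition Bstar :: "nat \<Rightarrow> nat \<Rightarrow> nat \<Rightarrow> nat \<Rightarrow> rat poly" where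
  "Bstar m l k j = smult (1 / of_nat (fact (l - 1)))
     (\<Sum>i\<in>{0..bigL m l}. monom (of_nat (fact i) * of_int (sigma m l k j i)) (bigL m l - i))"

text \<open>The normalising constant prod_{p <= m prime} p^(floor(m/p) v_p(l!) - v_p(l)).
 For p <= m and l >= 1 the exponent is nonnegative, so truncated subtraction is harmless.\<close>
definition Dconst :: "nat \<Rightarrow> nat \<Rightarrow> nat" where
  "Dconst m l = (\<Prod>p\<in>{p. prime p \<and> p \<le> m}.
      p ^ ((m div p) * multiplicity p (fact l) - multiplicity p l))"

end

theory Submission
  imports Defs
begin

text \<open>
  Up to the factor 1/(l-1)!, the coefficients of B*_{k,0} are the numbers i! sigma_i, where
  sigma_i are the coefficients of P(w) = prod_h (h - w)^{l_h}. Say that d divides a polynomial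
  with coefficients q_i in the factorial sense if d divides every i! q_i; since
  i! = (i choose j) j! (i-j)!, this property is multiplicative. If the prime p divides h, then
  p^{v_p(n!)} divides (h - w)^n in this sense, because v_p((n-i)!) <= n - i <= v_p(h^{n-i}).
  The floor(m/p) + 1 multiples of p in {0..m} therefore contribute the exponent
  (floor(m/p) + 1) v_p(l!) - v_p(l) = v_p((l-1)!) + floor(m/p) v_p(l!) - v_p(l),
  the loss v_p(l) coming from the single factor with exponent l - 1. Hence (l-1)! times the
  normalising constant divides every i! sigma_i.
\<close>

lemma multiplicity_fact_eq_div:
  fixes p :: nat
  assumes p: "prime p"
  shows "multiplicity p (fact n :: nat) = n div p + multiplicity p (fact (n div p) :: nat)"
proof (induction n)
  case 0
  then show ?case by simp
next
  case (Suc n)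
  have fact_Suc_mult:
    "multiplicity p (fact (Suc j) :: nat) = multiplicity p (Suc j) + multiplicity p (fact j :: nat)" for j
    by (simp only: fact_Suc of_nat_id, rule prime_elem_multiplicity_mult_distrib) (use p in auto)
  show ?case
  proof (cases "p dvd Suc n")
    case True
    define q where "q = n div p"
    have Suc_div: "Suc n div p = Suc q"
      unfolding q_def using True by (subst div_Suc) (simp add: dvd_eq_mod_eq_0)
    have "Suc n = p * Suc q" using dvd_mult_div_cancel[OF True] Suc_div by metis
    then have "multiplicity p (Suc n) = Suc (multiplicity p (Suc q))"
      using p by (simp only:) (rule multiplicity_times_same; auto simp: prime_gt_0_nat)
    then show ?thesis
      using Suc.IH fact_Suc_mult[of n] fact_Suc_mult[of q] by (simp add: Suc_div q_def)
  next
    case False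
    then have "Suc n div p = n div p" by (subst div_Suc) (simp add: dvd_eq_mod_eq_0)
    then show ?thesis using False Suc.IH fact_Suc_mult[of n] by (simp add: not_dvd_imp_multiplicity_0)
  qed
qed

lemma multiplicity_fact_le:
  fixes p :: nat
  assumes p: "prime p"
  shows "multiplicity p (fact n :: nat) \<le> n"
proof (induction n rule: less_induct)
  case (less n)
  have p1: "p \<ge> 2" using p prime_ge_2_nat by blast
  show ?case
  proof (cases "n = 0")
    case False
    then have "multiplicity p (fact (n div p) :: nat) \<le> n div p"
      using less p1 by simp
    moreover have "2 * (n div p) \<le> n"
      using mult_le_mono1[OF p1, of "n div p"] div_times_less_eq_dividend[of n p]
      by (metis mult.commute order_trans)
    ultimately show ?thesis using multiplicity_fact_eq_div[OF p, of n] by linarith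
  qed simp
qed

definition fact_coeffs_dvd :: "int \<Rightarrow> int poly \<Rightarrow> bool" where
  "fact_coeffs_dvd d Q \<longleftrightarrow> (\<forall>i. d dvd fact i * coeff Q i)"

lemma fact_coeffs_dvd_one [simp]: "fact_coeffs_dvd 1 Q"
  by (simp add: fact_coeffs_dvd_def)

lemma fact_coeffs_dvd_trans: "d' dvd d \<Longrightarrow> fact_coeffs_dvd d Q \<Longrightarrow> fact_coeffs_dvd d' Q"
  unfolding fact_coeffs_dvd_def by (meson dvd_trans)

lemma fact_coeffs_dvd_mult:
  assumes "fact_coeffs_dvd a Q" "fact_coeffs_dvd b R"
  shows "fact_coeffs_dvd (a * b) (Q * R)"
  unfolding fact_coeffs_dvd_def
proof
  fix i
  have "fact i * coeff (Q * R) i =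
      (\<Sum>j\<le>i. of_nat (i choose j) * ((fact j * coeff Q j) * (fact (i - j) * coeff R (i - j))))"
  proof -
    have fact_split: "(fact i :: int) = of_nat (i choose j) * fact j * fact (i - j)" if "j \<le> i" for j
    proof -
      have "(fact i :: int) = of_nat (fact j * fact (i - j) * (i choose j))"
        by (simp only: binomial_fact_lemma[OF that] of_nat_fact)
      then show ?thesis by (simp add: of_nat_fact mult_ac)
    qed
    show ?thesis
      unfolding coeff_mult sum_distrib_left by (intro sum.cong refl) (simp add: fact_split mult_ac)
  qed
  also have "a * b dvd \<dots>"
    using assms unfolding fact_coeffs_dvd_def by (intro dvd_sum dvd_mult[OF mult_dvd_mono]) auto
  finally show "a * b dvd fact i * coeff (Q * R) i" .
qed

lemma fact_coeffs_dvd_prod: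
  assumes "\<And>h. h \<in> A \<Longrightarrow> fact_coeffs_dvd (d h) (Q h)"
  shows "fact_coeffs_dvd (\<Prod>h\<in>A. d h) (\<Prod>h\<in>A. Q h)"
  using assms by (induction A rule: infinite_finite_induct) (auto intro: fact_coeffs_dvd_mult)

lemma fact_coeffs_dvd_linear_power:
  fixes p :: nat and h c :: int
  assumes p: "prime p" and "int p dvd h"
  shows "fact_coeffs_dvd (int p ^ multiplicity p (fact n :: nat)) ([:h, c:] ^ n)"
  unfolding fact_coeffs_dvd_def
proof
  fix i
  show "int p ^ multiplicity p (fact n :: nat) dvd fact i * coeff ([:h, c:] ^ n) i"
  proof (cases "i \<le> n")
    case False
    have "degree ([:h, c:] ^ n) \<le> n"
      by (rule order.trans[OF degree_power_le]) (simp add: degree_pCons_le)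
    then show ?thesis using False by (simp add: coeff_eq_0)
  next
    case True
    define X :: nat where "X = fact i * (n choose i)"
    have "X * fact (n - i) = fact n"
      unfolding X_def using binomial_fact_lemma[OF True] by (simp add: mult_ac)
    then have "multiplicity p (fact n :: nat) = multiplicity p X + multiplicity p (fact (n - i) :: nat)"
      using p True by (metis fact_nonzero mult_eq_0_iff prime_elem_multiplicity_mult_distrib prime_imp_prime_elem)
    also have "\<dots> \<le> multiplicity p X + (n - i)"
      using multiplicity_fact_le[OF p] by simp
    finally have "int p ^ multiplicity p (fact n :: nat) dvd int p ^ (multiplicity p X + (n - i))"
      by (rule le_imp_power_dvd)
    also have "\<dots> dvd int X * h ^ (n - i)"
      unfolding power_add using assms(2)
      by (intro mult_dvd_mono dvd_power_same) (metis multiplicity_dvd of_nat_dvd_iff of_nat_power)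
    also have "\<dots> dvd fact i * coeff ([:h, c:] ^ n) i"
      using True by (simp add: coeff_linear_poly_power X_def of_nat_fact mult_ac)
    finally show ?thesis .
  qed
qed

lemma dvd_if_prime_powers_dvd:
  fixes d :: nat and y :: int
  assumes "d > 0" and prime_powers: "\<And>p. prime p \<Longrightarrow> int p ^ multiplicity p d dvd y"
  shows "int d dvd y"
proof (cases "y = 0")
  case False
  have "d dvd nat \<bar>y\<bar>"
  proof (rule multiplicity_le_imp_dvd)
    fix p :: nat
    assume "prime p"
    then have "p ^ multiplicity p d dvd nat \<bar>y\<bar>"
      using prime_powers by (metis dvd_abs_iff int_dvd_int_iff of_nat_power abs_ge_zero int_nat_eq)
    then show "multiplicity p d \<le> multiplicity p (nat \<bar>y\<bar>)"
      using False \<open>prime p\<close> by (intro multiplicity_geI) auto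
  qed (use assms in simp)
  then show ?thesis by (metis dvd_abs_iff int_dvd_int_iff int_nat_eq abs_ge_zero)
qed simp

lemma fact_coeffs_dvd_if_prime_powers:
  fixes d :: nat
  assumes "d > 0" "\<And>p. prime p \<Longrightarrow> fact_coeffs_dvd (int p ^ multiplicity p d) Q"
  shows "fact_coeffs_dvd (int d) Q"
  using assms unfolding fact_coeffs_dvd_def by (blast intro: dvd_if_prime_powers_dvd)

lemma fact_coeffs_dvd_Pkj_prime:
  fixes p :: nat
  assumes p: "prime p"
  shows "fact_coeffs_dvd
    (int p ^ (\<Sum>h\<in>{0..m}. if p dvd h then multiplicity p (fact (lexp l k h) :: nat) else 0))
    (Pkj m l k 0)"
  unfolding Pkj_def power_sum
proof (rule fact_coeffs_dvd_prod)
  fix h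
  show "fact_coeffs_dvd (int p ^ (if p dvd h then multiplicity p (fact (lexp l k h) :: nat) else 0))
          ([:int h - int 0, -1:] ^ lexp l k h)"
    using fact_coeffs_dvd_linear_power[OF p, of "int h"] by simp
qed

lemma card_multiples_atMost:
  fixes p m :: nat
  assumes "p > 0"
  shows "card {h\<in>{0..m}. p dvd h} = m div p + 1"
proof -
  have "{h\<in>{0..m}. p dvd h} = (\<lambda>t. p * t) ` {0..m div p}"
    using assms by (auto simp: less_eq_div_iff_mult_less_eq mult.commute)
  moreover have "inj_on (\<lambda>t. p * t) {0..m div p}"
    using assms by (auto simp: inj_on_def)
  ultimately show ?thesis by (simp add: card_image)
qed

lemma multiplicity_Dconst_le:
  fixes p :: nat
  assumes "prime p"
  shows "multiplicity p (Dconst m l) \<le> (m div p) * multiplicity p (fact l :: nat) - multiplicity p l"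
  unfolding Dconst_def using assms by (subst multiplicity_prod_prime_powers) auto

lemma Dconst_pos: "Dconst m l > 0"
  unfolding Dconst_def by (intro prod_pos) (auto simp: prime_gt_0_nat)

lemma multiplicity_fact_Dconst_le:
  fixes p :: nat
  assumes p: "prime p" and l: "l \<ge> 1"
  shows "multiplicity p (fact (l - 1) :: nat) + multiplicity p (Dconst m l)
     \<le> (\<Sum>h\<in>{0..m}. if p dvd h then multiplicity p (fact (lexp l k h) :: nat) else 0)"
proof -
  define v where "v = multiplicity p (fact l :: nat)"
  define w where "w = multiplicity p l"
  define T where "T = {h\<in>{0..m}. p dvd h}"
  have "fact l = l * (fact (l - 1) :: nat)"
    using l by (cases l) auto
  then have v_eq: "v = w + multiplicity p (fact (l - 1) :: nat)"
    unfolding v_def w_def using l p by (simp add: prime_elem_multiplicity_mult_distrib)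
  have "(\<Sum>h\<in>T. multiplicity p (fact (lexp l k h) :: nat)) + (\<Sum>h\<in>T. if h = k then w else 0)
      = (\<Sum>h\<in>T. v)"
    unfolding sum.distrib[symmetric] using v_eq by (intro sum.cong) (auto simp: lexp_def v_def)
  also have "\<dots> = (m div p) * v + v"
    unfolding T_def using card_multiples_atMost[of p m] p by (simp add: prime_gt_0_nat)
  finally have "(\<Sum>h\<in>T. multiplicity p (fact (lexp l k h) :: nat)) + w \<ge> (m div p) * v + v"
    unfolding T_def by (auto simp: sum.delta split: if_splits)
  moreover have "(\<Sum>h\<in>{0..m}. if p dvd h then multiplicity p (fact (lexp l k h) :: nat) else 0)
      = (\<Sum>h\<in>T. multiplicity p (fact (lexp l k h) :: nat))"
    unfolding T_def by (rule sum.inter_filter[symmetric]) simp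
  ultimately show ?thesis
    using multiplicity_Dconst_le[OF p, of m l] v_eq unfolding v_def[symmetric] w_def[symmetric]
    by linarith
qed

lemma fact_coeffs_dvd_Pkj:
  assumes "l \<ge> 1"
  shows "fact_coeffs_dvd (int (fact (l - 1) * Dconst m l)) (Pkj m l k 0)"
proof (rule fact_coeffs_dvd_if_prime_powers)
  show "fact (l - 1) * Dconst m l > 0"
    using Dconst_pos[of m l] by simp
next
  fix p :: nat
  assume p: "prime p"
  have "multiplicity p (fact (l - 1) * Dconst m l)
      = multiplicity p (fact (l - 1) :: nat) + multiplicity p (Dconst m l)"
    using p Dconst_pos[of m l] by (simp add: prime_elem_multiplicity_mult_distrib)
  also have "\<dots> \<le> (\<Sum>h\<in>{0..m}. if p dvd h then multiplicity p (fact (lexp l k h) :: nat) else 0)"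
    by (rule multiplicity_fact_Dconst_le[OF p assms])
  finally show "fact_coeffs_dvd (int p ^ multiplicity p (fact (l - 1) * Dconst m l)) (Pkj m l k 0)"
    by (rule fact_coeffs_dvd_trans[OF le_imp_power_dvd fact_coeffs_dvd_Pkj_prime[OF p]])
qed

lemma coeff_Bstar:
  "coeff (Bstar m l k j) i =
    (if i \<le> bigL m l
     then of_int (fact (bigL m l - i) * sigma m l k j (bigL m l - i)) / fact (l - 1) else 0)"
proof -
  have "coeff (Bstar m l k j) i = (\<Sum>x\<in>{0..bigL m l}.
      if x = bigL m l - i \<and> i \<le> bigL m l then of_int (fact x * sigma m l k j x) else 0) / fact (l - 1)"
    unfolding Bstar_def coeff_smult coeff_sum coeff_monom
    by (simp add: sum_divide_distrib of_int_fact)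
      (intro sum.cong refl; auto)
  then show ?thesis by (simp add: sum.delta_remove)
qed

theorem theorem6p1:
  fixes m l k :: nat
  assumes "m \<ge> 1" and "l \<ge> 1" and "k \<le> m"
  shows "\<forall>i. coeff (smult (1 / of_nat (Dconst m l)) (Bstar m l k 0)) i \<in> \<int>"
proof
  fix i
  define L where "L = bigL m l"
  define N where "N = fact (l - 1) * Dconst m l"
  obtain c where c: "fact (L - i) * sigma m l k 0 (L - i) = int N * c"
    using fact_coeffs_dvd_Pkj[OF assms(2), of m k] unfolding fact_coeffs_dvd_def sigma_def N_def
    by blast
  have "N \<noteq> 0"
    unfolding N_def using Dconst_pos[of m l] by simp
  then have "coeff (smult (1 / of_nat (Dconst m l)) (Bstar m l k 0)) i = (if i \<le> L then of_int c else 0)"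
    unfolding coeff_smult coeff_Bstar L_def[symmetric] c by (simp add: N_def field_simps)
  then show "coeff (smult (1 / of_nat (Dconst m l)) (Bstar m l k 0)) i \<in> \<int>"
    by simp
qed

end
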